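(* Let $\mathcal Z=\mathbb{R}^d$ and let $k$ be a continuous, shift-invariant, positive definite kernel with $\sup_zk(z,z)\le1$, written via Bochner's theorem as $k(z,z')=\int_{\mathbb{R}^d}p_k(w)\cos(\langle w,z-z'\rangle)\,dw$ with $p_k\ge0$ integrable, and let $c_k=\int p_k(w)\,dw$. Let $(w_1,b_1),\dots,(w_m,b_m)$ be i.i.d. with $w_j\sim p_k/c_k$ and $b_j\sim\mathcal U[0,2\pi]$ independent. For $z\in\mathcal Z$ set $g^z_{w,b}(\cdot)=2c_k\cos(\langle w,z\rangle+b)\cos(\langle w,\cdot\rangle+b)$ and $\hat g^z_m=\frac1m\sum_{j=1}^mg^z_{w_j,b_j}$. Then for any fixed $S=\{z_1,\dots,z_n\}\subset\mathcal Z$, any Borel probability measure $Q$ on $\mathcal Z$, and any $\delta\in(0,1)$, with probability at least $1-\delta$ over $\{(w_j,b_j)\}_{j=1}^m$, $$\Big\|\mu_k(P_S)-\frac1n\sum_{i=1}^n\hat g^{z_i}_m\Big\|_{L^2(Q)}\le\frac{2c_k}{\sqrt m}\Big(1+\sqrt{2\log(n/\delta)}\Big).$$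
   Context: $\mu_k(P_S)=\frac1n\sum_{i=1}^nk(z_i,\cdot)$ is the empirical kernel mean embedding of $S$ (viewed as an element of $L^2(Q)$). $L^2(Q)$ is the space of functions $f$ with $\int f^2\,dQ<\infty$ with norm $(\int f^2dQ)^{1/2}$. *)

theory Defs
  imports "HOL-Probability.Probability"
begin

definition bochner_kernel :: "(real^'d \<Rightarrow> real) \<Rightarrow> real^'d \<Rightarrow> real^'d \<Rightarrow> real" where
  "bochner_kernel p z z' = (LINT w|lborel. p w * cos (w \<bullet> (z - z')))"

definition ck :: "(real^'d \<Rightarrow> real) \<Rightarrow> real" where
  "ck p = (LINT w|lborel. p w)"

definition feature_dist :: "(real^'d \<Rightarrow> real) \<Rightarrow> ((real^'d) \<times> real) measure" where
  "feature_dist p = density lborel (\<lambda>w. ennreal (p w / ck p)) \<Otimes>\<^sub>M uniform_measure lborel {0..2*pi}"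

definition rf_g :: "real \<Rightarrow> real^'d \<Rightarrow> real \<Rightarrow> real^'d \<Rightarrow> real^'d \<Rightarrow> real" where
  "rf_g c w b z x = 2 * c * cos (w \<bullet> z + b) * cos (w \<bullet> x + b)"

definition ghat :: "real \<Rightarrow> nat \<Rightarrow> (nat \<Rightarrow> (real^'d) \<times> real) \<Rightarrow> real^'d \<Rightarrow> real^'d \<Rightarrow> real" where
  "ghat c m \<omega> z x = (1 / real m) * (\<Sum>j<m. rf_g c (fst (\<omega> j)) (snd (\<omega> j)) z x)"

text \<open>Empirical kernel mean embedding of S = {zs 0, ..., zs (n-1)}.\<close>
definition kme :: "('a \<Rightarrow> 'a \<Rightarrow> real) \<Rightarrow> nat \<Rightarrow> (nat \<Rightarrow> 'a) \<Rightarrow> 'a \<Rightarrow> real" where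
  "kme k n zs x = (1 / real n) * (\<Sum>i<n. k (zs i) x)"

definition L2_norm :: "'a measure \<Rightarrow> ('a \<Rightarrow> real) \<Rightarrow> real" where
  "L2_norm Q f = sqrt (LINT x|Q. (f x)^2)"

end

theory Submission
  imports Defs
begin

text \<open>
  Write \<open>Y(w, b) = \<mu>_k(P_S) - (1/n) \<Sum>_i g^{z_i}_{w,b}\<close>. The error of the \<open>m\<close>-feature estimate is
  the sample mean of \<open>m\<close> i.i.d. copies of the random function \<open>Y\<close>, which is bounded by \<open>3 c_k\<close> and
  centred (integrating \<open>g^z_{w,b}\<close> over the uniform phase \<open>b\<close> gives \<open>c_k cos \<langle>w, z - x\<rangle>\<close>, and
  then Bochner's formula). By Fubini and Jensen, the expected \<open>L^2(Q)\<close> norm of the sample mean is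
  at most \<open>2 c_k / \<surd>m\<close>, and replacing one feature moves it by at most \<open>4 c_k / m\<close>. McDiarmid's
  inequality, proved by integrating out one coordinate at a time and applying Hoeffding's lemma to
  each, bounds the deviation above the mean at confidence level \<open>\<delta> / n\<close>, which is where \<open>log (n / \<delta>)\<close>
  comes from.
\<close>

lemma abs_average_le:
  fixes a :: "nat \<Rightarrow> real"
  assumes "\<And>i. i < n \<Longrightarrow> \<bar>a i\<bar> \<le> b" and "0 \<le> b"
  shows "\<bar>(1 / real n) * (\<Sum>i<n. a i)\<bar> \<le> b"
proof -
  have "\<bar>\<Sum>i<n. a i\<bar> \<le> real n * b"
    using sum_abs[of a "{..<n}"] sum_bounded_above[of "{..<n}" "\<lambda>i. \<bar>a i\<bar>" b] assms(1)
    by (simp del: sum_abs)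
  then show ?thesis
    using assms(2) by (cases "n = 0") (auto simp: abs_mult field_simps)
qed

lemma (in prob_space) square_expectation_le:
  fixes X :: "'a \<Rightarrow> real"
  assumes "integrable M X" "integrable M (\<lambda>x. (X x)\<^sup>2)"
  shows "(expectation X)\<^sup>2 \<le> expectation (\<lambda>x. (X x)\<^sup>2)"
  using variance_positive[of X] variance_eq[OF assms] by simp

lemma (in prob_space) variance_le_square_bound:
  fixes X :: "'a \<Rightarrow> real"
  assumes X_meas: "X \<in> borel_measurable M" and X_bounded: "\<And>x. x \<in> space M \<Longrightarrow> \<bar>X x\<bar> \<le> b"
  shows "(\<integral>x. (X x - expectation X)\<^sup>2 \<partial>M) \<le> b\<^sup>2"
proof -
  have square_le: "(X x)\<^sup>2 \<le> b\<^sup>2" if "x \<in> space M" for x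
    using power_mono[OF X_bounded[OF that] abs_ge_zero[of "X x"], of 2] by simp
  have "integrable M X"
    using X_meas X_bounded by (intro integrable_const_bound[where B=b] AE_I2) auto
  moreover have X_square_integrable: "integrable M (\<lambda>x. (X x)\<^sup>2)"
    using X_meas square_le by (intro integrable_const_bound[where B="b\<^sup>2"] AE_I2) auto
  ultimately have "(\<integral>x. (X x - expectation X)\<^sup>2 \<partial>M) \<le> (\<integral>x. (X x)\<^sup>2 \<partial>M)"
    using variance_eq[of X] by simp
  also have "\<dots> \<le> b\<^sup>2"
    using integral_mono[OF X_square_integrable _ square_le] by (simp add: prob_space)
  finally show ?thesis .
qed

section \<open>McDiarmid's inequality\<close>

definition bounded_differences :: "'a measure \<Rightarrow> nat \<Rightarrow> real \<Rightarrow> ((nat \<Rightarrow> 'a) \<Rightarrow> real) \<Rightarrow> bool" where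
  "bounded_differences M m c f \<longleftrightarrow>
     (\<forall>\<xi>\<in>space (PiM {..<m} (\<lambda>_. M)). \<forall>j<m. \<forall>y\<in>space M. \<bar>f (\<xi>(j := y)) - f \<xi>\<bar> \<le> c)"

lemma Hoeffdings_lemma_oscillation:
  fixes F :: "'a \<Rightarrow> real"
  assumes M: "prob_space M" and l: "l > 0"
    and F_meas: "F \<in> borel_measurable M"
    and F_bounded: "\<And>y. y \<in> space M \<Longrightarrow> \<bar>F y\<bar> \<le> B"
    and F_osc: "\<And>y y'. y \<in> space M \<Longrightarrow> y' \<in> space M \<Longrightarrow> F y - F y' \<le> c"
  shows "(\<integral>\<^sup>+y. ennreal (exp (l * (F y - (\<integral>y'. F y' \<partial>M)))) \<partial>M) \<le> ennreal (exp (l\<^sup>2 * c\<^sup>2 / 8))"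
proof -
  interpret prob_space M by (rule M)
  define a where "a = (INF y\<in>space M. F y)"
  have bdd: "bdd_below (F ` space M)"
    using F_bounded by (intro bdd_belowI[of _ "-B"]) (force simp: abs_le_iff)
  have "a \<le> F y" "F y \<le> a + c" if "y \<in> space M" for y
  proof -
    show "a \<le> F y" unfolding a_def using bdd that by (rule cINF_lower)
    have "F y - c \<le> a" unfolding a_def
      using not_empty F_osc[OF that] by (intro cINF_greatest) (auto simp: algebra_simps)
    then show "F y \<le> a + c" by simp
  qed
  then interpret interval_bounded_random_variable M F a "a + c"
    using F_meas by unfold_locales auto
  show ?thesis using Hoeffdings_lemma_nn_integral[OF l] by simp
qed

lemma fun_upd_in_space_PiM_Suc:
  "\<xi> \<in> space (PiM {..<k} (\<lambda>_. M)) \<Longrightarrow> y \<in> space M \<Longrightarrow> \<xi>(k := y) \<in> space (PiM {..<Suc k} (\<lambda>_. M))"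
  by (auto simp: space_PiM PiE_def extensional_def less_Suc_eq)

lemma bounded_differences_integral_last:
  fixes f :: "(nat \<Rightarrow> 'a) \<Rightarrow> real"
  assumes M: "prob_space M"
    and f_meas: "f \<in> borel_measurable (PiM {..<Suc k} (\<lambda>_. M))"
    and f_bounded: "\<And>\<xi>. \<xi> \<in> space (PiM {..<Suc k} (\<lambda>_. M)) \<Longrightarrow> \<bar>f \<xi>\<bar> \<le> B"
    and f_bd: "bounded_differences M (Suc k) c f"
  defines "g \<equiv> \<lambda>\<xi>. \<integral>y. f (\<xi>(k := y)) \<partial>M"
  shows "g \<in> borel_measurable (PiM {..<k} (\<lambda>_. M))"
    and "\<And>\<xi>. \<xi> \<in> space (PiM {..<k} (\<lambda>_. M)) \<Longrightarrow> \<bar>g \<xi>\<bar> \<le> B"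
    and "bounded_differences M k c g"
proof -
  interpret prob_space M by (rule M)
  let ?P = "PiM {..<k} (\<lambda>_. M)"
  have upd_meas: "(\<lambda>(\<xi>, y). \<xi>(k := y)) \<in> ?P \<Otimes>\<^sub>M M \<rightarrow>\<^sub>M PiM {..<Suc k} (\<lambda>_. M)"
    using measurable_fun_upd[where J="{..<k}" and I="{..<Suc k}"]
    by (auto simp: case_prod_beta' lessThan_Suc)
  show "g \<in> borel_measurable ?P"
    unfolding g_def using measurable_comp[OF upd_meas f_meas]
    by (intro borel_measurable_lebesgue_integral) (simp add: comp_def case_prod_beta')
  have section_integrable: "integrable M (\<lambda>y. f (\<xi>(k := y)))" if "\<xi> \<in> space ?P" for \<xi>
  proof (rule integrable_const_bound[where B=B])
    show "(\<lambda>y. f (\<xi>(k := y))) \<in> borel_measurable M"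
      using measurable_comp[OF measurable_component_update f_meas[unfolded lessThan_Suc], of \<xi>] that
      by (simp add: comp_def fun_upd_def)
  qed (use f_bounded fun_upd_in_space_PiM_Suc[OF that] in auto)
  show "\<bar>g \<xi>\<bar> \<le> B" if "\<xi> \<in> space ?P" for \<xi>
  proof -
    have "\<bar>g \<xi>\<bar> \<le> (\<integral>y. \<bar>f (\<xi>(k := y))\<bar> \<partial>M)"
      unfolding g_def by (rule integral_abs_bound)
    also have "\<dots> \<le> (\<integral>y. B \<partial>M)"
      using section_integrable[OF that] f_bounded fun_upd_in_space_PiM_Suc[OF that]
      by (intro integral_mono) auto
    finally show ?thesis by (simp add: prob_space)
  qed
  show "bounded_differences M k c g"
    unfolding bounded_differences_def
  proof (intro ballI allI impI)
    fix \<xi> j y' assume \<xi>: "\<xi> \<in> space ?P" and j: "j < k" and y': "y' \<in> space M"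
    have \<xi>': "\<xi>(j := y') \<in> space ?P"
      using \<xi> j y' by (auto simp: space_PiM PiE_def extensional_def)
    have "\<bar>f ((\<xi>(k := y))(j := y')) - f (\<xi>(k := y))\<bar> \<le> c" if "y \<in> space M" for y
      using f_bd fun_upd_in_space_PiM_Suc[OF \<xi> that] j y' unfolding bounded_differences_def by auto
    moreover have "(\<xi>(k := y))(j := y') = (\<xi>(j := y'))(k := y)" for y
      using j by (auto simp: fun_upd_twist)
    ultimately have diff: "\<bar>f ((\<xi>(j := y'))(k := y)) - f (\<xi>(k := y))\<bar> \<le> c" if "y \<in> space M" for y
      using that by metis
    have "\<bar>g (\<xi>(j := y')) - g \<xi>\<bar> = \<bar>\<integral>y. f ((\<xi>(j := y'))(k := y)) - f (\<xi>(k := y)) \<partial>M\<bar>"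
      unfolding g_def using section_integrable[OF \<xi>'] section_integrable[OF \<xi>] by simp
    also have "\<dots> \<le> (\<integral>y. c \<partial>M)"
      using section_integrable[OF \<xi>'] section_integrable[OF \<xi>] diff
      by (intro integral_abs_bound[THEN order_trans] integral_mono) auto
    finally show "\<bar>g (\<xi>(j := y')) - g \<xi>\<bar> \<le> c" by (simp add: prob_space)
  qed
qed

text \<open>Integrating out the last coordinate leaves a function of the others with the same bounded
  differences; Hoeffding's lemma controls the last coordinate.\<close>

lemma mcdiarmid_mgf:
  fixes f :: "(nat \<Rightarrow> 'a) \<Rightarrow> real"
  assumes M: "prob_space M" and l: "l > 0"
  shows "f \<in> borel_measurable (PiM {..<m} (\<lambda>_. M)) \<Longrightarrow>
    (\<And>\<xi>. \<xi> \<in> space (PiM {..<m} (\<lambda>_. M)) \<Longrightarrow> \<bar>f \<xi>\<bar> \<le> B) \<Longrightarrow>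
    bounded_differences M m c f \<Longrightarrow>
    (\<integral>\<^sup>+\<xi>. ennreal (exp (l * (f \<xi> - (\<integral>\<xi>'. f \<xi>' \<partial>PiM {..<m} (\<lambda>_. M))))) \<partial>PiM {..<m} (\<lambda>_. M))
      \<le> ennreal (exp (l\<^sup>2 * real m * c\<^sup>2 / 8))"
proof (induction m arbitrary: f B)
  case 0
  show ?case
    by (simp add: PiM_empty lebesgue_integral_count_space_finite nn_integral_count_space_finite)
next
  case (Suc k)
  interpret M: prob_space M by (rule M)
  interpret product_sigma_finite "\<lambda>_. M"
    by (simp add: product_sigma_finite_def M.sigma_finite_measure_axioms)
  let ?P = "PiM {..<k} (\<lambda>_. M)"
  have P_Suc: "PiM {..<Suc k} (\<lambda>_. M) = PiM (insert k {..<k}) (\<lambda>_. M)"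
    by (simp add: lessThan_Suc)
  define g where "g \<xi> = (\<integral>y. f (\<xi>(k := y)) \<partial>M)" for \<xi>
  note g = bounded_differences_integral_last[OF M Suc.prems, folded g_def]
  note [measurable] = g(1) Suc.prems(1)[unfolded P_Suc]
  define E where "E = (\<integral>\<xi>. g \<xi> \<partial>?P)"
  interpret P_Suc: prob_space "PiM {..<Suc k} (\<lambda>_. M)" by (rule prob_space_PiM[OF M])
  have f_integrable: "integrable (PiM {..<Suc k} (\<lambda>_. M)) f"
    using Suc.prems(1,2) by (intro P_Suc.integrable_const_bound[where B=B]) auto
  have "(\<integral>\<xi>. f \<xi> \<partial>PiM {..<Suc k} (\<lambda>_. M)) = E"
    unfolding E_def g_def P_Suc by (rule product_integral_insert) (use f_integrable P_Suc in auto)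
  then have "(\<integral>\<^sup>+\<xi>. ennreal (exp (l * (f \<xi> - (\<integral>\<xi>'. f \<xi>' \<partial>PiM {..<Suc k} (\<lambda>_. M))))) \<partial>PiM {..<Suc k} (\<lambda>_. M))
      = (\<integral>\<^sup>+\<xi>. (\<integral>\<^sup>+y. ennreal (exp (l * (f (\<xi>(k := y)) - E))) \<partial>M) \<partial>?P)"
    unfolding P_Suc by (simp add: product_nn_integral_insert)
  also have "\<dots> = (\<integral>\<^sup>+\<xi>. ennreal (exp (l * (g \<xi> - E)))
                       * (\<integral>\<^sup>+y. ennreal (exp (l * (f (\<xi>(k := y)) - g \<xi>))) \<partial>M) \<partial>?P)"
    by (auto intro!: nn_integral_cong simp flip: nn_integral_cmult ennreal_mult
             simp: exp_add[symmetric] algebra_simps)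
  also have "\<dots> \<le> (\<integral>\<^sup>+\<xi>. ennreal (exp (l * (g \<xi> - E))) * ennreal (exp (l\<^sup>2 * c\<^sup>2 / 8)) \<partial>?P)"
  proof (intro nn_integral_mono mult_left_mono)
    fix \<xi> assume \<xi>: "\<xi> \<in> space ?P"
    show "(\<integral>\<^sup>+y. ennreal (exp (l * (f (\<xi>(k := y)) - g \<xi>))) \<partial>M) \<le> ennreal (exp (l\<^sup>2 * c\<^sup>2 / 8))"
      unfolding g_def
    proof (rule Hoeffdings_lemma_oscillation[OF M l])
      show "(\<lambda>y. f (\<xi>(k := y))) \<in> borel_measurable M"
        using \<xi> by measurable
      show "\<bar>f (\<xi>(k := y))\<bar> \<le> B" if "y \<in> space M" for y
        using Suc.prems(2) fun_upd_in_space_PiM_Suc[OF \<xi> that] .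
      show "f (\<xi>(k := y)) - f (\<xi>(k := y')) \<le> c" if "y \<in> space M" "y' \<in> space M" for y y'
        using Suc.prems(3) fun_upd_in_space_PiM_Suc[OF \<xi> that(2)] that(1)
        unfolding bounded_differences_def by force
    qed
  qed simp
  also have "\<dots> \<le> ennreal (exp (l\<^sup>2 * real k * c\<^sup>2 / 8)) * ennreal (exp (l\<^sup>2 * c\<^sup>2 / 8))"
    using Suc.IH[OF g] unfolding E_def by (simp add: nn_integral_multc mult_right_mono)
  also have "\<dots> = ennreal (exp (l\<^sup>2 * real (Suc k) * c\<^sup>2 / 8))"
    by (simp flip: ennreal_mult exp_add add: algebra_simps)
  finally show ?case .
qed

lemma mcdiarmid_inequality:
  fixes f :: "(nat \<Rightarrow> 'a) \<Rightarrow> real"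
  assumes M: "prob_space M" and c: "c > 0" and t: "t > 0" and m: "m \<ge> 1"
    and f_meas: "f \<in> borel_measurable (PiM {..<m} (\<lambda>_. M))"
    and f_bounded: "\<And>\<xi>. \<xi> \<in> space (PiM {..<m} (\<lambda>_. M)) \<Longrightarrow> \<bar>f \<xi>\<bar> \<le> B"
    and f_bd: "bounded_differences M m c f"
  shows "measure (PiM {..<m} (\<lambda>_. M))
      {\<xi> \<in> space (PiM {..<m} (\<lambda>_. M)). f \<xi> - (\<integral>\<xi>'. f \<xi>' \<partial>PiM {..<m} (\<lambda>_. M)) \<ge> t}
    \<le> exp (- 2 * t\<^sup>2 / (real m * c\<^sup>2))"
proof -
  let ?P = "PiM {..<m} (\<lambda>_. M)"
  interpret P: prob_space ?P by (rule prob_space_PiM[OF M])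
  define E where "E = (\<integral>\<xi>. f \<xi> \<partial>?P)"
  define l where "l = 4 * t / (real m * c\<^sup>2)"
  have l: "l > 0" using t c m by (simp add: l_def)
  have "emeasure ?P {\<xi> \<in> space ?P. f \<xi> - E \<ge> t}
      \<le> ennreal (exp (- l * t)) * (\<integral>\<^sup>+\<xi>. ennreal (exp (l * (f \<xi> - E))) * indicator (space ?P) \<xi> \<partial>?P)"
    using f_meas by (intro Chernoff_ineq_nn_integral_ge[OF l]) auto
  also have "(\<integral>\<^sup>+\<xi>. ennreal (exp (l * (f \<xi> - E))) * indicator (space ?P) \<xi> \<partial>?P)
      = (\<integral>\<^sup>+\<xi>. ennreal (exp (l * (f \<xi> - E))) \<partial>?P)"
    by (intro nn_integral_cong) simp
  also have "ennreal (exp (- l * t)) * \<dots> \<le> ennreal (exp (- l * t)) * ennreal (exp (l\<^sup>2 * real m * c\<^sup>2 / 8))"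
    unfolding E_def by (intro mult_left_mono mcdiarmid_mgf[OF M l f_meas f_bounded f_bd]) simp_all
  also have "\<dots> = ennreal (exp (- 2 * t\<^sup>2 / (real m * c\<^sup>2)))"
    using c m by (simp flip: ennreal_mult exp_add add: l_def field_simps power2_eq_square)
  finally show ?thesis
    unfolding E_def by (simp add: P.emeasure_eq_measure ennreal_le_iff)
qed

lemma mcdiarmid_confidence:
  fixes f :: "(nat \<Rightarrow> 'a) \<Rightarrow> real"
  assumes M: "prob_space M" and c: "c > 0" and m: "m \<ge> 1" and \<delta>: "0 < \<delta>" "\<delta> < 1"
    and f_meas [measurable]: "f \<in> borel_measurable (PiM {..<m} (\<lambda>_. M))"
    and f_bounded: "\<And>\<xi>. \<xi> \<in> space (PiM {..<m} (\<lambda>_. M)) \<Longrightarrow> \<bar>f \<xi>\<bar> \<le> B"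
    and f_bd: "bounded_differences M m c f"
  shows "measure (PiM {..<m} (\<lambda>_. M)) {\<xi> \<in> space (PiM {..<m} (\<lambda>_. M)).
      f \<xi> \<le> (\<integral>\<xi>'. f \<xi>' \<partial>PiM {..<m} (\<lambda>_. M)) + c * sqrt (real m * ln (1 / \<delta>) / 2)} \<ge> 1 - \<delta>"
proof -
  let ?P = "PiM {..<m} (\<lambda>_. M)"
  interpret P: prob_space ?P by (rule prob_space_PiM[OF M])
  define E where "E = (\<integral>\<xi>. f \<xi> \<partial>?P)"
  define L where "L = ln (1 / \<delta>)"
  define t where "t = c * sqrt (real m * L / 2)"
  have L: "L > 0" using \<delta> by (simp add: L_def)
  then have t: "t > 0" using c m by (simp add: t_def)
  have "2 * t\<^sup>2 = (real m * c\<^sup>2) * L"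
    using L by (simp add: t_def power_mult_distrib)
  then have "exp (- 2 * t\<^sup>2 / (real m * c\<^sup>2)) = exp (- L)"
    using c m by (simp add: minus_divide_left)
  also have "\<dots> = \<delta>" using \<delta> by (simp add: L_def exp_minus)
  finally have tail: "measure ?P {\<xi> \<in> space ?P. f \<xi> - E \<ge> t} \<le> \<delta>"
    using mcdiarmid_inequality[OF M c t m f_meas f_bounded f_bd] by (simp add: E_def)
  define S where "S = {\<xi> \<in> space ?P. f \<xi> \<le> E + t}"
  have "space ?P - S \<subseteq> {\<xi> \<in> space ?P. f \<xi> - E \<ge> t}"
    by (auto simp: S_def)
  moreover have "{\<xi> \<in> space ?P. f \<xi> - E \<ge> t} \<in> sets ?P"
    by measurable
  ultimately have "measure ?P (space ?P - S) \<le> \<delta>"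
    using tail by (blast intro: P.finite_measure_mono order_trans)
  moreover have "measure ?P (space ?P - S) = 1 - measure ?P S"
    by (rule P.prob_compl) (simp add: S_def)
  ultimately show ?thesis
    by (simp add: S_def E_def t_def L_def)
qed

section \<open>The \<open>L\<^sup>2\<close> norm\<close>

lemma square_le_mult_if_quadratic_nonneg:
  fixes a b c :: real
  assumes quadratic_nonneg: "\<And>t. 0 \<le> a - 2 * t * c + t\<^sup>2 * b" and b: "b \<ge> 0"
  shows "c\<^sup>2 \<le> a * b"
proof (cases "b = 0")
  case True
  have "c = 0"
  proof (rule ccontr)
    assume "c \<noteq> 0"
    then show False
      using quadratic_nonneg[of "(a + 1) / (2 * c)"] True by simp
  qed
  then show ?thesis using True by simp
next
  case False
  then have "0 \<le> a - c\<^sup>2 / b"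
    using quadratic_nonneg[of "c / b"] by (simp add: power2_eq_square field_simps)
  then show ?thesis using b False by (simp add: field_simps)
qed

lemma abs_mult_le_sum_squares:
  fixes a b :: real
  shows "\<bar>a * b\<bar> \<le> \<bar>a\<^sup>2 + b\<^sup>2\<bar>"
proof -
  have "2 * (\<bar>a\<bar> * \<bar>b\<bar>) \<le> a\<^sup>2 + b\<^sup>2"
    using sum_squares_bound[of "\<bar>a\<bar>" "\<bar>b\<bar>"] by (simp add: mult.assoc)
  moreover have "0 \<le> \<bar>a\<bar> * \<bar>b\<bar>" by simp
  ultimately have "\<bar>a\<bar> * \<bar>b\<bar> \<le> a\<^sup>2 + b\<^sup>2" by linarith
  then show ?thesis by (simp add: abs_mult)
qed

context
  fixes Q :: "'a measure" and u v :: "'a \<Rightarrow> real"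
  assumes u_meas [measurable]: "u \<in> borel_measurable Q" and u_square: "integrable Q (\<lambda>x. (u x)\<^sup>2)"
    and v_meas [measurable]: "v \<in> borel_measurable Q" and v_square: "integrable Q (\<lambda>x. (v x)\<^sup>2)"
begin

lemma integrable_mult_of_square_integrable: "integrable Q (\<lambda>x. u x * v x)"
  by (rule Bochner_Integration.integrable_bound[of _ "\<lambda>x. (u x)\<^sup>2 + (v x)\<^sup>2"])
     (use u_square v_square abs_mult_le_sum_squares in auto)

lemma integral_mult_le_L2_norm: "(\<integral>x. u x * v x \<partial>Q) \<le> L2_norm Q u * L2_norm Q v"
proof -
  note uv = integrable_mult_of_square_integrable
  define a b c where "a = (\<integral>x. (u x)\<^sup>2 \<partial>Q)" "b = (\<integral>x. (v x)\<^sup>2 \<partial>Q)" "c = (\<integral>x. u x * v x \<partial>Q)"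
  have "0 \<le> a - 2 * t * c + t\<^sup>2 * b" for t
  proof -
    have "0 \<le> (\<integral>x. (u x - t * v x)\<^sup>2 \<partial>Q)" by simp
    also have "\<dots> = (\<integral>x. (u x)\<^sup>2 - 2 * t * (u x * v x) + t\<^sup>2 * (v x)\<^sup>2 \<partial>Q)"
      by (simp add: power2_diff power_mult_distrib algebra_simps)
    also have "\<dots> = a - 2 * t * c + t\<^sup>2 * b"
      using u_square v_square uv by (simp add: a_b_c_def)
    finally show ?thesis .
  qed
  then have "c\<^sup>2 \<le> a * b"
    by (rule square_le_mult_if_quadratic_nonneg) (simp add: a_b_c_def)
  then have "\<bar>c\<bar> \<le> sqrt a * sqrt b"
    by (metis real_sqrt_abs real_sqrt_le_mono real_sqrt_mult)
  then show ?thesis by (simp add: L2_norm_def a_b_c_def)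
qed

lemma L2_norm_add_le: "L2_norm Q (\<lambda>x. u x + v x) \<le> L2_norm Q u + L2_norm Q v"
proof -
  have "(\<integral>x. (u x + v x)\<^sup>2 \<partial>Q) = (\<integral>x. (u x)\<^sup>2 + 2 * (u x * v x) + (v x)\<^sup>2 \<partial>Q)"
    by (simp add: power2_sum algebra_simps)
  also have "\<dots> = (L2_norm Q u)\<^sup>2 + 2 * (\<integral>x. u x * v x \<partial>Q) + (L2_norm Q v)\<^sup>2"
    using u_square v_square integrable_mult_of_square_integrable by (simp add: L2_norm_def)
  also have "\<dots> \<le> (L2_norm Q u + L2_norm Q v)\<^sup>2"
    using integral_mult_le_L2_norm by (simp add: power2_sum)
  finally show ?thesis
    by (simp add: L2_norm_def real_sqrt_le_iff real_le_lsqrt)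
qed

lemma square_integrable_diff: "integrable Q (\<lambda>x. (u x - v x)\<^sup>2)"
  using u_square v_square integrable_mult_of_square_integrable
  by (simp add: power2_diff mult.assoc)

end

lemma L2_norm_diff_ge:
  assumes "u \<in> borel_measurable Q" "integrable Q (\<lambda>x. (u x)\<^sup>2)"
    and "v \<in> borel_measurable Q" "integrable Q (\<lambda>x. (v x)\<^sup>2)"
  shows "\<bar>L2_norm Q u - L2_norm Q v\<bar> \<le> L2_norm Q (\<lambda>x. u x - v x)"
proof -
  have "L2_norm Q u \<le> L2_norm Q v + L2_norm Q (\<lambda>x. u x - v x)"
    using L2_norm_add_le[of v Q "\<lambda>x. u x - v x"] square_integrable_diff[of u Q v] assms by simp
  moreover have "L2_norm Q v \<le> L2_norm Q u + L2_norm Q (\<lambda>x. v x - u x)"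
    using L2_norm_add_le[of u Q "\<lambda>x. v x - u x"] square_integrable_diff[of v Q u] assms by simp
  moreover have "L2_norm Q (\<lambda>x. v x - u x) = L2_norm Q (\<lambda>x. u x - v x)"
    by (simp add: L2_norm_def power2_commute)
  ultimately show ?thesis by linarith
qed

lemma L2_norm_le_bound:
  assumes Q: "prob_space Q" and u_meas: "u \<in> borel_measurable Q"
    and u_bounded: "\<And>x. x \<in> space Q \<Longrightarrow> \<bar>u x\<bar> \<le> B"
  shows "L2_norm Q u \<le> B"
proof -
  interpret prob_space Q by (rule Q)
  have B: "0 \<le> B" using u_bounded not_empty by force
  have square_le: "(u x)\<^sup>2 \<le> B\<^sup>2" if "x \<in> space Q" for x
    using u_bounded[OF that] B by (simp add: abs_le_square_iff[symmetric])
  have "(\<integral>x. (u x)\<^sup>2 \<partial>Q) \<le> (\<integral>x. B\<^sup>2 \<partial>Q)"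
    using u_meas square_le
    by (intro integral_mono integrable_const_bound[where B="B\<^sup>2"]) auto
  then show ?thesis using B by (simp add: L2_norm_def prob_space real_sqrt_le_iff real_le_lsqrt)
qed

section \<open>Sample means of random functions\<close>

lemma integral_PiM_square_sum_centered:
  fixes Y :: "'a \<Rightarrow> real"
  assumes M: "prob_space M" and Y_meas [measurable]: "Y \<in> borel_measurable M"
    and Y_bounded: "\<And>y. y \<in> space M \<Longrightarrow> \<bar>Y y\<bar> \<le> B" and Y_centered: "(\<integral>y. Y y \<partial>M) = 0"
  shows "(\<integral>\<xi>. (\<Sum>j<m. Y (\<xi> j))\<^sup>2 \<partial>PiM {..<m} (\<lambda>_. M)) = real m * (\<integral>y. (Y y)\<^sup>2 \<partial>M)"
proof (induction m)
  case 0
  show ?case by (simp add: PiM_empty lebesgue_integral_count_space_finite)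
next
  case (Suc k)
  interpret M: prob_space M by (rule M)
  interpret product_sigma_finite "\<lambda>_. M"
    by (simp add: product_sigma_finite_def M.sigma_finite_measure_axioms)
  interpret P: prob_space "PiM {..<k} (\<lambda>_. M)" by (rule prob_space_PiM[OF M])
  have sum_bounded: "\<bar>\<Sum>j<n. Y (\<xi> j)\<bar> \<le> real n * B" if "\<xi> \<in> space (PiM {..<n} (\<lambda>_. M))" for n \<xi>
  proof -
    have "(\<Sum>j<n. \<bar>Y (\<xi> j)\<bar>) \<le> of_nat (card {..<n}) * B"
      using that by (intro sum_bounded_above) (auto simp: space_PiM intro: Y_bounded)
    then show ?thesis using sum_abs[of "\<lambda>j. Y (\<xi> j)" "{..<n}"] by (simp del: sum_abs)
  qed
  have square_sum_integrable: "integrable (PiM {..<n} (\<lambda>_. M)) (\<lambda>\<xi>. (\<Sum>j<n. Y (\<xi> j))\<^sup>2)" for n :: nat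
  proof -
    interpret Pn: prob_space "PiM {..<n} (\<lambda>_. M)" by (rule prob_space_PiM[OF M])
    show ?thesis
      using sum_bounded
      by (intro Pn.integrable_const_bound[where B="(real n * B)\<^sup>2"] AE_I2)
         (auto simp: abs_le_square_iff[symmetric] power_abs intro: order_trans[OF _ abs_ge_self])
  qed
  have Y_integrable: "integrable M Y"
    using Y_bounded by (intro M.integrable_const_bound[where B=B] AE_I2) auto
  have Y_square_integrable: "integrable M (\<lambda>y. (Y y)\<^sup>2)"
    using Y_bounded
    by (intro M.integrable_const_bound[where B="B\<^sup>2"] AE_I2)
       (auto simp: abs_le_square_iff[symmetric] power_abs intro: order_trans[OF _ abs_ge_self])
  have "(\<integral>\<xi>. (\<Sum>j<Suc k. Y (\<xi> j))\<^sup>2 \<partial>PiM {..<Suc k} (\<lambda>_. M))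
      = (\<integral>\<xi>. (\<integral>y. (Y y + (\<Sum>j<k. Y (\<xi> j)))\<^sup>2 \<partial>M) \<partial>PiM {..<k} (\<lambda>_. M))"
    using product_integral_insert[of "{..<k}" k "\<lambda>\<xi>. (\<Sum>j<Suc k. Y (\<xi> j))\<^sup>2"]
      square_sum_integrable[of "Suc k"]
    by (simp add: lessThan_Suc)
  also have "\<dots> = (\<integral>\<xi>. (\<integral>y. (Y y)\<^sup>2 \<partial>M) + (\<Sum>j<k. Y (\<xi> j))\<^sup>2 \<partial>PiM {..<k} (\<lambda>_. M))"
    using Y_integrable Y_square_integrable Y_centered by (simp add: power2_sum M.prob_space)
  also have "\<dots> = real (Suc k) * (\<integral>y. (Y y)\<^sup>2 \<partial>M)"
    using square_sum_integrable[of k] Suc.IH by (simp add: P.prob_space algebra_simps)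
  finally show ?case .
qed

locale random_function_sample = F: prob_space F + Q: prob_space Q
  for F :: "'v measure" and Q :: "'x measure" +
  fixes Y :: "'v \<Rightarrow> 'x \<Rightarrow> real" and B :: real
  assumes Y_measurable: "(\<lambda>(v, x). Y v x) \<in> borel_measurable (F \<Otimes>\<^sub>M Q)"
    and Y_bounded: "\<And>v x. \<bar>Y v x\<bar> \<le> B"
begin

definition sample_mean :: "nat \<Rightarrow> (nat \<Rightarrow> 'v) \<Rightarrow> 'x \<Rightarrow> real" where
  "sample_mean m \<xi> x = (1 / real m) * (\<Sum>j<m. Y (\<xi> j) x)"

abbreviation samples :: "nat \<Rightarrow> (nat \<Rightarrow> 'v) measure" where
  "samples m \<equiv> PiM {..<m} (\<lambda>_. F)"

lemma measurable_sample_mean: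
  "(\<lambda>(\<xi>, x). sample_mean m \<xi> x) \<in> borel_measurable (samples m \<Otimes>\<^sub>M Q)"
proof -
  have "(\<lambda>(\<xi>, x). Y (\<xi> j) x) \<in> borel_measurable (samples m \<Otimes>\<^sub>M Q)" if "j < m" for j
    using measurable_comp[OF _ Y_measurable, of "\<lambda>(\<xi>, x). (\<xi> j, x)"] that
    by (simp add: case_prod_beta' comp_def)
  then show ?thesis
    unfolding sample_mean_def by (simp add: case_prod_beta') measurable
qed

lemma abs_sample_mean_le: "\<bar>sample_mean m \<xi> x\<bar> \<le> B"
  unfolding sample_mean_def
  by (rule abs_average_le[OF Y_bounded]) (rule order_trans[OF abs_ge_zero Y_bounded])

lemma square_sample_mean_le: "(sample_mean m \<xi> x)\<^sup>2 \<le> B\<^sup>2"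
  using power_mono[OF abs_sample_mean_le[of m \<xi> x] abs_ge_zero, of 2] by simp

lemma measurable_sample_mean_section:
  "\<xi> \<in> space (samples m) \<Longrightarrow> sample_mean m \<xi> \<in> borel_measurable Q"
  using measurable_Pair2[OF measurable_sample_mean] by simp

lemma measurable_square_sample_mean:
  "(\<lambda>(\<xi>, x). (sample_mean m \<xi> x)\<^sup>2) \<in> borel_measurable (samples m \<Otimes>\<^sub>M Q)"
  using borel_measurable_power[OF measurable_sample_mean[of m], of 2] by (simp add: case_prod_beta')

lemma measurable_L2_norm_sample_mean:
  "(\<lambda>\<xi>. L2_norm Q (sample_mean m \<xi>)) \<in> borel_measurable (samples m)"
  using measurable_square_sample_mean[of m] unfolding L2_norm_def by measurable

lemma abs_L2_norm_sample_mean_le: "\<xi> \<in> space (samples m) \<Longrightarrow> \<bar>L2_norm Q (sample_mean m \<xi>)\<bar> \<le> B"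
  using L2_norm_le_bound[OF Q.prob_space_axioms measurable_sample_mean_section abs_sample_mean_le]
  by (simp add: L2_norm_def)

lemma square_integrable_sample_mean:
  "\<xi> \<in> space (samples m) \<Longrightarrow> integrable Q (\<lambda>x. (sample_mean m \<xi> x)\<^sup>2)"
  using measurable_sample_mean_section square_sample_mean_le
  by (intro Q.integrable_const_bound[where B="B\<^sup>2"] AE_I2) auto

lemma bounded_differences_L2_norm_sample_mean:
  assumes Y_diff: "\<And>v v' x. \<bar>Y v x - Y v' x\<bar> \<le> D"
  shows "bounded_differences F m (D / real m) (\<lambda>\<xi>. L2_norm Q (sample_mean m \<xi>))"
  unfolding bounded_differences_def
proof (intro ballI allI impI)
  fix \<xi> j y assume \<xi>: "\<xi> \<in> space (samples m)" and j: "j < m" and y: "y \<in> space F"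
  have \<xi>': "\<xi>(j := y) \<in> space (samples m)"
    using \<xi> j y by (auto simp: space_PiM PiE_def extensional_def)
  have "sample_mean m (\<xi>(j := y)) x - sample_mean m \<xi> x = (1 / real m) * (Y y x - Y (\<xi> j) x)" for x
    using j by (simp add: sample_mean_def sum.remove[of "{..<m}" j] flip: diff_divide_distrib)
  then have "\<bar>sample_mean m (\<xi>(j := y)) x - sample_mean m \<xi> x\<bar> \<le> D / real m" for x
    using Y_diff[of y x "\<xi> j"] by (simp add: abs_mult divide_right_mono)
  then have "L2_norm Q (\<lambda>x. sample_mean m (\<xi>(j := y)) x - sample_mean m \<xi> x) \<le> D / real m"
    using measurable_sample_mean_section[OF \<xi>'] measurable_sample_mean_section[OF \<xi>]
    by (intro L2_norm_le_bound[OF Q.prob_space_axioms]) auto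
  then show "\<bar>L2_norm Q (sample_mean m (\<xi>(j := y))) - L2_norm Q (sample_mean m \<xi>)\<bar> \<le> D / real m"
    using L2_norm_diff_ge[OF measurable_sample_mean_section[OF \<xi>'] square_integrable_sample_mean[OF \<xi>']
        measurable_sample_mean_section[OF \<xi>] square_integrable_sample_mean[OF \<xi>]]
    by linarith
qed

lemma integral_square_sample_mean:
  assumes x: "x \<in> space Q" and centered: "(\<integral>v. Y v x \<partial>F) = 0"
  shows "(\<integral>\<xi>. (sample_mean m \<xi> x)\<^sup>2 \<partial>samples m) = (\<integral>v. (Y v x)\<^sup>2 \<partial>F) / real m"
proof -
  have "(\<integral>\<xi>. (sample_mean m \<xi> x)\<^sup>2 \<partial>samples m) = (1 / real m)\<^sup>2 * (\<integral>\<xi>. (\<Sum>j<m. Y (\<xi> j) x)\<^sup>2 \<partial>samples m)"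
    unfolding sample_mean_def power_mult_distrib by (rule integral_mult_right_zero)
  also have "(\<integral>\<xi>. (\<Sum>j<m. Y (\<xi> j) x)\<^sup>2 \<partial>samples m) = real m * (\<integral>v. (Y v x)\<^sup>2 \<partial>F)"
    using measurable_Pair1[OF Y_measurable x] Y_bounded centered
    by (intro integral_PiM_square_sum_centered[OF F.prob_space_axioms]) auto
  finally show ?thesis by (simp add: power2_eq_square)
qed

lemma integral_L2_norm_sample_mean_le:
  assumes centered: "\<And>x. x \<in> space Q \<Longrightarrow> (\<integral>v. Y v x \<partial>F) = 0"
    and second_moment: "\<And>x. x \<in> space Q \<Longrightarrow> (\<integral>v. (Y v x)\<^sup>2 \<partial>F) \<le> \<sigma>\<^sup>2"
    and \<sigma>: "\<sigma> \<ge> 0" and m: "m \<ge> 1"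
  shows "(\<integral>\<xi>. L2_norm Q (sample_mean m \<xi>) \<partial>samples m) \<le> \<sigma> / sqrt (real m)"
proof -
  interpret P: prob_space "samples m" by (rule prob_space_PiM[OF F.prob_space_axioms])
  interpret PQ: pair_sigma_finite "samples m" Q ..
  interpret PQ: prob_space "samples m \<Otimes>\<^sub>M Q" by (rule prob_space_pair) unfold_locales
  define f where "f \<xi> = L2_norm Q (sample_mean m \<xi>)" for \<xi>
  have f_meas [measurable]: "f \<in> borel_measurable (samples m)"
    unfolding f_def by (rule measurable_L2_norm_sample_mean)
  have f_bounded: "\<bar>f \<xi>\<bar> \<le> B" if "\<xi> \<in> space (samples m)" for \<xi>
    unfolding f_def using that by (rule abs_L2_norm_sample_mean_le)
  have square_mean_integrable: "integrable (samples m \<Otimes>\<^sub>M Q) (\<lambda>(\<xi>, x). (sample_mean m \<xi> x)\<^sup>2)"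
    using measurable_square_sample_mean square_sample_mean_le
    by (intro PQ.integrable_const_bound[where B="B\<^sup>2"] AE_I2) auto
  have "(\<integral>\<xi>. (f \<xi>)\<^sup>2 \<partial>samples m) = (\<integral>\<xi>. (\<integral>x. (sample_mean m \<xi> x)\<^sup>2 \<partial>Q) \<partial>samples m)"
    by (simp add: f_def L2_norm_def)
  also have "\<dots> = (\<integral>x. (\<integral>\<xi>. (sample_mean m \<xi> x)\<^sup>2 \<partial>samples m) \<partial>Q)"
    using PQ.Fubini_integral[OF square_mean_integrable] by simp
  also have "\<dots> \<le> (\<integral>x. \<sigma>\<^sup>2 / real m \<partial>Q)"
    using PQ.integrable_snd[OF square_mean_integrable] second_moment
    by (intro integral_mono) (auto simp: integral_square_sample_mean centered divide_right_mono)
  finally have "(\<integral>\<xi>. (f \<xi>)\<^sup>2 \<partial>samples m) \<le> \<sigma>\<^sup>2 / real m"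
    by (simp add: Q.prob_space)
  moreover have "(\<integral>\<xi>. f \<xi> \<partial>samples m)\<^sup>2 \<le> (\<integral>\<xi>. (f \<xi>)\<^sup>2 \<partial>samples m)"
    using f_bounded power_mono[OF f_bounded abs_ge_zero, of _ 2]
    by (intro P.square_expectation_le P.integrable_const_bound[where B=B]
        P.integrable_const_bound[where B="B\<^sup>2"] AE_I2) auto
  ultimately have "sqrt ((\<integral>\<xi>. f \<xi> \<partial>samples m)\<^sup>2) \<le> sqrt (\<sigma>\<^sup>2 / real m)"
    by (intro real_sqrt_le_mono) simp
  then have "\<bar>\<integral>\<xi>. f \<xi> \<partial>samples m\<bar> \<le> \<sigma> / sqrt (real m)"
    using \<sigma> by (simp only: real_sqrt_abs real_sqrt_divide abs_of_nonneg)
  then show ?thesis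
    unfolding f_def by (rule abs_le_D1)
qed

lemma L2_norm_sample_mean_deviation:
  assumes centered: "\<And>x. x \<in> space Q \<Longrightarrow> (\<integral>v. Y v x \<partial>F) = 0"
    and second_moment: "\<And>x. x \<in> space Q \<Longrightarrow> (\<integral>v. (Y v x)\<^sup>2 \<partial>F) \<le> \<sigma>\<^sup>2"
    and \<sigma>: "\<sigma> \<ge> 0" and m: "m \<ge> 1"
    and Y_diff: "\<And>v v' x. \<bar>Y v x - Y v' x\<bar> \<le> D" and D: "D > 0"
    and \<delta>: "0 < \<delta>" "\<delta> < 1"
  shows "measure (samples m) {\<xi> \<in> space (samples m).
      L2_norm Q (sample_mean m \<xi>) \<le> \<sigma> / sqrt (real m) + D / sqrt (real m) * sqrt (ln (1 / \<delta>) / 2)}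
    \<ge> 1 - \<delta>"
proof -
  interpret P: prob_space "samples m" by (rule prob_space_PiM[OF F.prob_space_axioms])
  define f where "f \<xi> = L2_norm Q (sample_mean m \<xi>)" for \<xi>
  have f_meas [measurable]: "f \<in> borel_measurable (samples m)"
    unfolding f_def by (rule measurable_L2_norm_sample_mean)
  have "\<bar>f \<xi>\<bar> \<le> B" if "\<xi> \<in> space (samples m)" for \<xi>
    unfolding f_def using that by (rule abs_L2_norm_sample_mean_le)
  moreover have "bounded_differences F m (D / real m) f"
    unfolding f_def by (rule bounded_differences_L2_norm_sample_mean[OF Y_diff])
  ultimately have "measure (samples m) {\<xi> \<in> space (samples m).
      f \<xi> \<le> (\<integral>\<xi>'. f \<xi>' \<partial>samples m) + D / real m * sqrt (real m * ln (1 / \<delta>) / 2)} \<ge> 1 - \<delta>"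
    using D m by (intro mcdiarmid_confidence[OF F.prob_space_axioms _ m \<delta> f_meas]) auto
  also have "D / real m * sqrt (real m * ln (1 / \<delta>) / 2) = D / sqrt (real m) * sqrt (ln (1 / \<delta>) / 2)"
    using m by (simp add: real_sqrt_mult real_sqrt_divide field_simps)
  also have "measure (samples m) {\<xi> \<in> space (samples m).
      f \<xi> \<le> (\<integral>\<xi>'. f \<xi>' \<partial>samples m) + D / sqrt (real m) * sqrt (ln (1 / \<delta>) / 2)}
    \<le> measure (samples m) {\<xi> \<in> space (samples m).
      f \<xi> \<le> \<sigma> / sqrt (real m) + D / sqrt (real m) * sqrt (ln (1 / \<delta>) / 2)}"
    using integral_L2_norm_sample_mean_le[OF centered second_moment \<sigma> m, folded f_def]
    by (intro P.finite_measure_mono) auto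
  finally show ?thesis by (simp add: f_def)
qed

end

section \<open>Random Fourier features\<close>

lemma integral_cos_product_uniform:
  "(\<integral>b. cos (\<alpha> + b) * cos (\<beta> + b) \<partial>uniform_measure lborel {0..2 * pi}) = cos (\<alpha> - \<beta>) / 2"
proof -
  define G where "G b = (cos (\<alpha> - \<beta>) * b + sin (\<alpha> + \<beta> + 2 * b) / 2) / 2" for b
  have product_eq: "cos (\<alpha> + b) * cos (\<beta> + b) = (cos (\<alpha> - \<beta>) + cos (\<alpha> + \<beta> + 2 * b)) / 2" for b
    using cos_times_cos[of "\<alpha> + b" "\<beta> + b"] by (simp add: algebra_simps)
  have "(G has_real_derivative cos (\<alpha> + b) * cos (\<beta> + b)) (at b within {0..2 * pi})" for b
    unfolding G_def product_eq by (auto intro!: derivative_eq_intros)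
  then have "(\<integral>b. indicator {0..2 * pi} b *\<^sub>R (cos (\<alpha> + b) * cos (\<beta> + b)) \<partial>lborel) = G (2 * pi) - G 0"
    by (intro integral_FTC_atLeastAtMost)
       (auto simp: has_real_derivative_iff_has_vector_derivative intro!: continuous_intros)
  also have "\<dots> = pi * cos (\<alpha> - \<beta>)"
    using sin_periodic[of "\<alpha> + \<beta> + 2 * pi"] sin_periodic[of "\<alpha> + \<beta>"] by (simp add: G_def algebra_simps)
  moreover have "uniform_measure lborel {0..2 * pi}
      = density lborel (\<lambda>b. ennreal (indicator {0..2 * pi} b / (2 * pi)))"
    unfolding uniform_measure_def
    by (rule density_cong) (auto simp: ennreal_indicator[symmetric] divide_ennreal indicator_def)
  ultimately show ?thesis
    by (simp add: integral_density)
qed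

lemma abs_rf_g_le:
  assumes "c \<ge> 0"
  shows "\<bar>rf_g c w b z x\<bar> \<le> 2 * c"
proof -
  have "\<bar>cos (w \<bullet> z + b) * cos (w \<bullet> x + b)\<bar> \<le> 1"
    by (simp add: abs_mult mult_le_one)
  then show ?thesis
    using assms by (simp add: rf_g_def abs_mult mult.assoc mult_left_le)
qed

text \<open>\<open>feature_average p n zs (w, b)\<close> is \<open>(1/n) \<Sum>_i g^{z_i}_{w,b}\<close>, the estimate of \<open>\<mu>_k(P_S)\<close> from
  the single feature \<open>(w, b)\<close>; \<open>feature_residual\<close> is its error.\<close>

definition feature_average ::
    "(real^'d \<Rightarrow> real) \<Rightarrow> nat \<Rightarrow> (nat \<Rightarrow> real^'d) \<Rightarrow> (real^'d) \<times> real \<Rightarrow> real^'d \<Rightarrow> real" where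
  "feature_average p n zs v x = (1 / real n) * (\<Sum>i<n. rf_g (ck p) (fst v) (snd v) (zs i) x)"

definition feature_residual ::
    "(real^'d \<Rightarrow> real) \<Rightarrow> nat \<Rightarrow> (nat \<Rightarrow> real^'d) \<Rightarrow> (real^'d) \<times> real \<Rightarrow> real^'d \<Rightarrow> real" where
  "feature_residual p n zs v x = kme (bochner_kernel p) n zs x - feature_average p n zs v x"

context
  fixes p :: "real^'d \<Rightarrow> real"
  assumes p_nonneg: "\<And>w. p w \<ge> 0" and p_int: "integrable lborel p" and ck_pos: "ck p > 0"
begin

lemma prob_space_spectral_distribution: "prob_space (density lborel (\<lambda>w. ennreal (p w / ck p)))"
proof (rule prob_spaceI)
  let ?W = "density lborel (\<lambda>w. ennreal (p w / ck p))"
  have "emeasure ?W (space ?W) = (\<integral>\<^sup>+w. ennreal (p w / ck p) \<partial>lborel)"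
    using p_int by (subst emeasure_density) auto
  also have "\<dots> = ennreal (\<integral>w. p w / ck p \<partial>lborel)"
    using p_int p_nonneg ck_pos by (intro nn_integral_eq_integral) auto
  also have "\<dots> = 1" using ck_pos by (simp add: ck_def)
  finally show "emeasure ?W (space ?W) = 1" .
qed

lemma prob_space_feature_dist: "prob_space (feature_dist p)"
  unfolding feature_dist_def
  by (intro prob_space_pair prob_space_spectral_distribution prob_space_uniform_measure) auto

lemma integral_rf_g_feature_dist:
  "(\<integral>v. rf_g (ck p) (fst v) (snd v) z x \<partial>feature_dist p) = bochner_kernel p z x"
proof -
  let ?W = "density lborel (\<lambda>w. ennreal (p w / ck p))"
  let ?U = "uniform_measure lborel {0..2 * pi :: real}"
  interpret W: prob_space ?W by (rule prob_space_spectral_distribution)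
  interpret U: prob_space ?U by (intro prob_space_uniform_measure) auto
  interpret WU: pair_sigma_finite ?W ?U ..
  interpret F: prob_space "feature_dist p" by (rule prob_space_feature_dist)
  have "(\<lambda>v. rf_g (ck p) (fst v) (snd v) z x) \<in> borel_measurable (feature_dist p)"
    unfolding rf_g_def feature_dist_def by measurable
  then have rf_integrable: "integrable (feature_dist p) (\<lambda>v. rf_g (ck p) (fst v) (snd v) z x)"
    using abs_rf_g_le[of "ck p"] ck_pos
    by (intro F.integrable_const_bound[where B="2 * ck p"] AE_I2) auto
  have "(\<integral>v. rf_g (ck p) (fst v) (snd v) z x \<partial>feature_dist p) = (\<integral>w. (\<integral>b. rf_g (ck p) w b z x \<partial>?U) \<partial>?W)"
    using WU.integral_fst'[OF rf_integrable[unfolded feature_dist_def]] by (simp add: feature_dist_def)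
  also have "\<dots> = (\<integral>w. ck p * cos (w \<bullet> z - w \<bullet> x) \<partial>?W)"
    by (simp add: rf_g_def mult.assoc integral_cos_product_uniform)
  also have "\<dots> = (\<integral>w. p w * cos (w \<bullet> (z - x)) \<partial>lborel)"
    using p_int p_nonneg ck_pos by (simp add: integral_density inner_diff_right)
  finally show ?thesis unfolding bochner_kernel_def .
qed

lemma abs_bochner_kernel_le: "\<bar>bochner_kernel p z x\<bar> \<le> ck p"
proof -
  have p_cos_le: "\<bar>p w * cos t\<bar> \<le> p w" for w t
    using p_nonneg[of w] abs_cos_le_one[of t] by (simp add: abs_mult mult_left_le)
  have "\<bar>bochner_kernel p z x\<bar> \<le> (\<integral>w. \<bar>p w * cos (w \<bullet> (z - x))\<bar> \<partial>lborel)"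
    unfolding bochner_kernel_def by (rule integral_abs_bound)
  also have "\<dots> \<le> ck p"
    unfolding ck_def using p_int p_cos_le p_nonneg
    by (intro integral_mono Bochner_Integration.integrable_bound[OF p_int]) auto
  finally show ?thesis .
qed

lemma abs_feature_average_le: "\<bar>feature_average p n zs v x\<bar> \<le> 2 * ck p"
  unfolding feature_average_def using abs_rf_g_le[of "ck p"] ck_pos by (intro abs_average_le) auto

lemma measurable_feature_average: "(\<lambda>v. feature_average p n zs v x) \<in> borel_measurable (feature_dist p)"
  unfolding feature_average_def rf_g_def feature_dist_def by measurable

lemma integral_feature_average:
  "(\<integral>v. feature_average p n zs v x \<partial>feature_dist p) = kme (bochner_kernel p) n zs x"
proof -
  interpret F: prob_space "feature_dist p" by (rule prob_space_feature_dist)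
  have "integrable (feature_dist p) (\<lambda>v. rf_g (ck p) (fst v) (snd v) z x)" for z
    using abs_rf_g_le[of "ck p"] ck_pos
    by (intro F.integrable_const_bound[where B="2 * ck p"] AE_I2) (auto simp: rf_g_def feature_dist_def)
  then show ?thesis
    by (simp add: feature_average_def kme_def integral_rf_g_feature_dist)
qed

lemma integral_feature_residual: "(\<integral>v. feature_residual p n zs v x \<partial>feature_dist p) = 0"
proof -
  interpret F: prob_space "feature_dist p" by (rule prob_space_feature_dist)
  have "integrable (feature_dist p) (\<lambda>v. feature_average p n zs v x)"
    using measurable_feature_average abs_feature_average_le
    by (intro F.integrable_const_bound[where B="2 * ck p"] AE_I2) auto
  then show ?thesis
    by (simp add: feature_residual_def integral_feature_average F.prob_space)
qed

lemma integral_square_feature_residual_le: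
  "(\<integral>v. (feature_residual p n zs v x)\<^sup>2 \<partial>feature_dist p) \<le> (2 * ck p)\<^sup>2"
proof -
  interpret F: prob_space "feature_dist p" by (rule prob_space_feature_dist)
  show ?thesis
    using F.variance_le_square_bound[OF measurable_feature_average abs_feature_average_le]
    by (simp add: feature_residual_def integral_feature_average power2_commute)
qed

lemma abs_feature_residual_diff_le:
  "\<bar>feature_residual p n zs v x - feature_residual p n zs v' x\<bar> \<le> 4 * ck p"
  using abs_feature_average_le[of n zs v x] abs_feature_average_le[of n zs v' x]
  by (simp add: feature_residual_def abs_le_iff)

lemma random_function_sample_feature_residual:
  assumes Q: "prob_space Q" "sets Q = sets borel"
    and kernel_meas [measurable]: "\<And>z. bochner_kernel p z \<in> borel_measurable borel"
  shows "random_function_sample (feature_dist p) Q (feature_residual p n zs) (3 * ck p)"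
proof (intro random_function_sample.intro random_function_sample_axioms.intro
    prob_space_feature_dist Q(1))
  have "(\<lambda>(v, x). feature_residual p n zs v x) \<in> borel_measurable (feature_dist p \<Otimes>\<^sub>M borel)"
    unfolding feature_residual_def feature_average_def kme_def rf_g_def feature_dist_def by measurable
  then show "(\<lambda>(v, x). feature_residual p n zs v x) \<in> borel_measurable (feature_dist p \<Otimes>\<^sub>M Q)"
    by (simp add: measurable_cong_sets[OF sets_pair_measure_cong[OF refl Q(2)] refl])
  show "\<bar>feature_residual p n zs v x\<bar> \<le> 3 * ck p" for v x
  proof -
    have "\<bar>kme (bochner_kernel p) n zs x\<bar> \<le> ck p"
      unfolding kme_def using abs_bochner_kernel_le ck_pos by (intro abs_average_le) auto
    then show ?thesis
      using abs_feature_average_le[of n zs v x] by (simp add: feature_residual_def abs_le_iff)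
  qed
qed

end

lemma kme_minus_average_ghat:
  assumes "m \<ge> 1"
  shows "kme (bochner_kernel p) n zs x - (1 / real n) * (\<Sum>i<n. ghat (ck p) m \<xi> (zs i) x)
    = (1 / real m) * (\<Sum>j<m. feature_residual p n zs (\<xi> j) x)"
  using assms
  by (simp add: feature_residual_def feature_average_def ghat_def sum_subtractf sum_distrib_left
      sum.swap[of _ "{..<n}"] field_simps)

theorem lemma6p2:
  fixes p :: "real^'d \<Rightarrow> real" and zs :: "nat \<Rightarrow> real^'d"
    and Q :: "(real^'d) measure" and m n :: nat and \<delta> :: real
  defines "k \<equiv> bochner_kernel p"
  assumes p_nonneg: "\<And>w. p w \<ge> 0"
    and p_int: "integrable lborel p"
    and ck_pos: "ck p > 0"
    and k_cont: "continuous_on UNIV (\<lambda>(z, z'). k z z')"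
    and k_bound: "\<And>z. k z z \<le> 1"
    and Q: "prob_space Q" "sets Q = sets borel"
    and m: "m \<ge> 1" and n: "n \<ge> 1"
    and \<delta>: "0 < \<delta>" "\<delta> < 1"
  shows "measure (PiM {..<m} (\<lambda>_. feature_dist p))
           {\<omega> \<in> space (PiM {..<m} (\<lambda>_. feature_dist p)).
              L2_norm Q (\<lambda>x. kme k n zs x - (1 / real n) * (\<Sum>i<n. ghat (ck p) m \<omega> (zs i) x))
                \<le> 2 * ck p / sqrt (real m) * (1 + sqrt (2 * ln (real n / \<delta>)))}
         \<ge> 1 - \<delta>"
proof -
  \<comment> \<open>Continuity of \<open>k\<close> only serves measurability.\<close>
  have "continuous_on UNIV (\<lambda>x. (\<lambda>(z, z'). k z z') (z, x))" for z
    by (rule continuous_on_compose2[OF k_cont]) (auto intro!: continuous_intros)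
  then have "bochner_kernel p z \<in> borel_measurable borel" for z
    unfolding k_def by (intro borel_measurable_continuous_onI) simp
  then interpret random_function_sample "feature_dist p" Q "feature_residual p n zs" "3 * ck p"
    by (rule random_function_sample_feature_residual[OF p_nonneg p_int ck_pos Q])
  have "0 \<le> 2 * ck p" "0 < 4 * ck p" "0 < \<delta> / real n" "\<delta> / real n < 1"
    using ck_pos n \<delta> by (auto simp: field_simps)
  note deviation = L2_norm_sample_mean_deviation[OF integral_feature_residual[OF p_nonneg p_int ck_pos]
      integral_square_feature_residual_le[OF p_nonneg p_int ck_pos] this(1) m
      abs_feature_residual_diff_le[OF p_nonneg p_int ck_pos] this(2-4)]
  have "1 / (\<delta> / real n) = real n / \<delta>" by simp
  note deviation = deviation[unfolded this]
  have bound_eq: "2 * ck p / sqrt (real m) + 4 * ck p / sqrt (real m) * sqrt (ln (real n / \<delta>) / 2)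
      = 2 * ck p / sqrt (real m) * (1 + sqrt (2 * ln (real n / \<delta>)))"
  proof -
    have "sqrt (2 * ln (real n / \<delta>)) = sqrt (2\<^sup>2 * (ln (real n / \<delta>) / 2))"
      by simp
    then show ?thesis by (simp only: real_sqrt_mult real_sqrt_abs) (simp add: algebra_simps)
  qed
  have mean_eq: "sample_mean m = (\<lambda>\<xi> x. kme k n zs x - (1 / real n) * (\<Sum>i<n. ghat (ck p) m \<xi> (zs i) x))"
    by (intro ext) (simp only: sample_mean_def k_def kme_minus_average_ghat[OF m])
  have "1 - \<delta> \<le> 1 - \<delta> / real n"
    using n \<delta> by (simp add: field_simps)
  then show ?thesis
    using deviation unfolding bound_eq mean_eq by (rule order_trans)
qed

end
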